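(* Let $G$ be an infinite, connected, locally finite graph, let $P$ be a metric ray of $G$ with ordered vertex set $\{u_0,u_1,u_2,\dots\}$, and let $S=\{x_1,\dots,x_n\}$ be a finite set of vertices of $G$. Then there exists an integer $i_0\ge 0$ such that for every $k\ge 0$, $$r(u_{i_0+k}\mid S)=r(u_{i_0}\mid S)+(k,k,\dots,k),$$ where $(k,\dots,k)$ has $n=|S|$ entries.
   Context: $d$ denotes shortest-path distance in $G$. For a finite ordered set $S=\{x_1,\dots,x_n\}$ of vertices, $r(u\mid S)=(d(u,x_1),\dots,d(u,x_n))$. A metric ray of $G$ with endpoint $u_0$ is an infinite subgraph $P$ whose vertices admit an ordering $u_0,u_1,u_2,\dots$ (all distinct) with $u_k$ adjacent to $u_{k+1}$ in $P$ for all $k\ge 0$ and $d_G(u_0,u_k)=k$ for all $k\ge0$. *)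

theory Defs
  imports Main
begin

text \<open>Simple graphs on the vertex type 'a, given by a symmetric irreflexive adjacency
relation E. The vertex set of the graph is UNIV :: 'a set.\<close>

definition sym_irrefl :: "('a \<Rightarrow> 'a \<Rightarrow> bool) \<Rightarrow> bool" where
  "sym_irrefl E \<longleftrightarrow> (\<forall>x y. E x y \<longrightarrow> E y x) \<and> (\<forall>x. \<not> E x x)"

definition walk :: "('a \<Rightarrow> 'a \<Rightarrow> bool) \<Rightarrow> 'a list \<Rightarrow> bool" where
  "walk E p \<longleftrightarrow> p \<noteq> [] \<and> (\<forall>i. Suc i < length p \<longrightarrow> E (p ! i) (p ! Suc i))"

definition connected_graph :: "('a \<Rightarrow> 'a \<Rightarrow> bool) \<Rightarrow> bool" where
  "connected_graph E \<longleftrightarrow> (\<forall>x y. \<exists>p. walk E p \<and> hd p = x \<and> last p = y)"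

definition locally_finite :: "('a \<Rightarrow> 'a \<Rightarrow> bool) \<Rightarrow> bool" where
  "locally_finite E \<longleftrightarrow> (\<forall>x. finite {y. E x y})"

definition gdist :: "('a \<Rightarrow> 'a \<Rightarrow> bool) \<Rightarrow> 'a \<Rightarrow> 'a \<Rightarrow> nat" where
  "gdist E x y = (LEAST n. \<exists>p. walk E p \<and> hd p = x \<and> last p = y \<and> length p = Suc n)"

definition metric_rep :: "('a \<Rightarrow> 'a \<Rightarrow> bool) \<Rightarrow> 'a \<Rightarrow> 'a list \<Rightarrow> nat list" where
  "metric_rep E u S = map (gdist E u) S"

definition metric_ray :: "('a \<Rightarrow> 'a \<Rightarrow> bool) \<Rightarrow> (nat \<Rightarrow> 'a) \<Rightarrow> bool" where
  "metric_ray E u \<longleftrightarrow> inj u \<and> (\<forall>k. E (u k) (u (Suc k))) \<and> (\<forall>k. gdist E (u 0) (u k) = k)"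

end

theory Submission
  imports Defs
begin

(* Let u be a metric ray and x any vertex.  By the triangle inequality
   k = d(u 0, u k) <= d(u 0, x) + d(u k, x), so the "excess"
       e_x(k) = d(u k, x) + d(u 0, x) - k
   is a natural number; since u k and u (Suc k) are adjacent, d(u (Suc k), x) <= d(u k, x) + 1,
   so e_x is nonincreasing.  A nonincreasing sequence of naturals is eventually constant,
   and once e_x is constant from index N on we get d(u (N + k), x) = d(u N, x) + k for all k.
   This property persists for every later starting index, so for the finitely many vertices
   of S a common index i0 (the maximum of the individual ones) works. *)

lemma walk_Cons: "p \<noteq> [] \<Longrightarrow> walk E (a # p) \<longleftrightarrow> E a (hd p) \<and> walk E p"
  unfolding walk_def
  by (auto simp: hd_conv_nth nth_Cons split: nat.splits)

lemma walk_join: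
  assumes "walk E p" "walk E q" "last p = hd q"
  shows "walk E (p @ tl q)"
  using assms
proof (induction p)
  case Nil then show ?case by (simp add: walk_def)
next
  case (Cons a p)
  show ?case
  proof (cases "p = []")
    case True
    with Cons.prems show ?thesis by (cases q) (auto simp: walk_def)
  next
    case False
    with Cons.prems have "E a (hd p)" "walk E p" using walk_Cons by metis+
    with Cons False show ?thesis by (simp add: walk_Cons)
  qed
qed

lemma walk_rev:
  assumes "sym_irrefl E" "walk E p"
  shows "walk E (rev p)"
  using assms(2) unfolding walk_def
proof (intro conjI allI impI)
  fix i assume p: "p \<noteq> [] \<and> (\<forall>i. Suc i < length p \<longrightarrow> E (p ! i) (p ! Suc i))"
    and i: "Suc i < length (rev p)"
  then have "E (p ! (length p - Suc (Suc i))) (p ! Suc (length p - Suc (Suc i)))" by simp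
  moreover have "Suc (length p - Suc (Suc i)) = length p - Suc i" using i by simp
  ultimately show "E (rev p ! i) (rev p ! Suc i)"
    using i assms(1) by (simp add: rev_nth sym_irrefl_def)
qed simp

lemma gdist_witness:
  assumes "connected_graph E"
  shows "\<exists>p. walk E p \<and> hd p = x \<and> last p = y \<and> length p = Suc (gdist E x y)"
proof -
  obtain p where p: "walk E p" "hd p = x" "last p = y"
    using assms connected_graph_def by metis
  then have "\<exists>n p. walk E p \<and> hd p = x \<and> last p = y \<and> length p = Suc n"
    by (metis Suc_pred length_greater_0_conv walk_def)
  then show ?thesis unfolding gdist_def by (rule LeastI_ex)
qed

lemma gdist_le_walk:
  "walk E p \<Longrightarrow> hd p = x \<Longrightarrow> last p = y \<Longrightarrow> length p = Suc n \<Longrightarrow> gdist E x y \<le> n"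
  unfolding gdist_def by (rule Least_le) blast

lemma gdist_triangle:
  assumes "connected_graph E"
  shows "gdist E x z \<le> gdist E x y + gdist E y z"
proof -
  obtain p where p: "walk E p" "hd p = x" "last p = y" "length p = Suc (gdist E x y)"
    using gdist_witness[OF assms] by blast
  obtain q where q: "walk E q" "hd q = y" "last q = z" "length q = Suc (gdist E y z)"
    using gdist_witness[OF assms] by blast
  have "walk E (p @ tl q)" using walk_join[OF p(1) q(1)] p q by simp
  moreover have "hd (p @ tl q) = x" "last (p @ tl q) = z"
    using p q by (cases q; cases "tl q"; auto simp: walk_def)+
  moreover have "length (p @ tl q) = Suc (gdist E x y + gdist E y z)" using p q by simp
  ultimately show ?thesis by (rule gdist_le_walk)
qed

lemma gdist_commute:
  assumes "sym_irrefl E" "connected_graph E"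
  shows "gdist E x y = gdist E y x"
proof -
  have "gdist E a b \<le> gdist E b a" for a b
  proof -
    obtain p where p: "walk E p" "hd p = b" "last p = a" "length p = Suc (gdist E b a)"
      using gdist_witness[OF assms(2)] by blast
    have "walk E (rev p)" using walk_rev[OF assms(1) p(1)] .
    moreover have "hd (rev p) = a" "last (rev p) = b"
      using p walk_def by (auto simp: hd_rev last_rev)
    ultimately show ?thesis using gdist_le_walk p(4) by (metis length_rev)
  qed
  then show ?thesis by (simp add: antisym)
qed

lemma gdist_adjacent: "E a b \<Longrightarrow> gdist E a b \<le> 1"
  by (rule gdist_le_walk[of E "[a, b]"]) (auto simp: walk_def nth_Cons split: nat.splits)

lemma nonincreasing_nat_eventually_const:
  fixes h :: "nat \<Rightarrow> nat"
  assumes step: "\<And>k. h (Suc k) \<le> h k"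
  shows "\<exists>N. \<forall>k\<ge>N. h k = h N"
proof -
  obtain N where N: "h N = (LEAST v. v \<in> range h)"
    using LeastI_ex[of "\<lambda>v. v \<in> range h"] by (metis imageE rangeI)
  have "h k = h N" if "N \<le> k" for k
  proof (rule antisym)
    show "h k \<le> h N" using that by (induction k rule: dec_induct) (auto intro: order_trans[OF step])
    show "h N \<le> h k" unfolding N by (rule Least_le) blast
  qed
  then show ?thesis by blast
qed

text \<open>The amount by which the path through x exceeds the ray from u 0 to u k.\<close>
definition ray_excess :: "('a \<Rightarrow> 'a \<Rightarrow> bool) \<Rightarrow> (nat \<Rightarrow> 'a) \<Rightarrow> 'a \<Rightarrow> nat \<Rightarrow> nat" where
  "ray_excess E u x k = gdist E (u k) x + gdist E (u 0) x - k"

locale geodesic_ray =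
  fixes E :: "'a \<Rightarrow> 'a \<Rightarrow> bool" and u :: "nat \<Rightarrow> 'a"
  assumes sym: "sym_irrefl E"
    and conn: "connected_graph E"
    and adj: "\<And>k. E (u k) (u (Suc k))"
    and geod: "\<And>k. gdist E (u 0) (u k) = k"
begin

text \<open>The subtraction in the excess never truncates.\<close>
lemma ray_index_le: "k \<le> gdist E (u k) x + gdist E (u 0) x"
proof -
  have "k = gdist E (u 0) (u k)" using geod by simp
  also have "\<dots> \<le> gdist E (u 0) x + gdist E x (u k)" by (rule gdist_triangle[OF conn])
  finally show ?thesis using gdist_commute[OF sym conn] by simp
qed

lemma gdist_ray_step: "gdist E (u (Suc k)) x \<le> gdist E (u k) x + 1"
proof -
  have "E (u (Suc k)) (u k)" using adj sym by (simp add: sym_irrefl_def)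
  then have "gdist E (u (Suc k)) (u k) \<le> 1" by (rule gdist_adjacent)
  moreover have "gdist E (u (Suc k)) x \<le> gdist E (u (Suc k)) (u k) + gdist E (u k) x"
    by (rule gdist_triangle[OF conn])
  ultimately show ?thesis by simp
qed

lemma ray_excess_nonincreasing: "ray_excess E u x (Suc k) \<le> ray_excess E u x k"
  using gdist_ray_step[of k x] ray_index_le[of k x] ray_index_le[of "Suc k" x]
  unfolding ray_excess_def by simp

lemma ray_excess_const_iff:
  "ray_excess E u x (N + k) = ray_excess E u x N \<longleftrightarrow>
     gdist E (u (N + k)) x = gdist E (u N) x + k"
  using ray_index_le[of "N + k" x] ray_index_le[of N x] unfolding ray_excess_def by auto

lemma ray_eventually_receding:
  "\<exists>N. \<forall>M\<ge>N. \<forall>k. gdist E (u (M + k)) x = gdist E (u M) x + k"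
proof -
  obtain N where N: "\<And>k. k \<ge> N \<Longrightarrow> ray_excess E u x k = ray_excess E u x N"
    using nonincreasing_nat_eventually_const[of "ray_excess E u x", OF ray_excess_nonincreasing] by blast
  have "ray_excess E u x (M + k) = ray_excess E u x M" if "M \<ge> N" for M k
    using N[of M] N[of "M + k"] that by simp
  then show ?thesis using ray_excess_const_iff by blast
qed

end

theorem lemma4:
  fixes E :: "'a \<Rightarrow> 'a \<Rightarrow> bool" and u :: "nat \<Rightarrow> 'a" and S :: "'a list"
  assumes "sym_irrefl E"
    and "infinite (UNIV :: 'a set)"
    and "connected_graph E"
    and "locally_finite E"
    and "metric_ray E u"
    and "distinct S"
  shows "\<exists>i0::nat. \<forall>k::nat.
           metric_rep E (u (i0 + k)) S = map (\<lambda>d. d + k) (metric_rep E (u i0) S)"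
proof -
  interpret geodesic_ray E u
    using assms(1,3,5) by unfold_locales (auto simp: metric_ray_def)
  obtain N where N: "\<And>x M k. M \<ge> N x \<Longrightarrow> gdist E (u (M + k)) x = gdist E (u M) x + k"
    using ray_eventually_receding by metis
  define i0 where "i0 = Max (N ` set S)"
  have "gdist E (u (i0 + k)) x = gdist E (u i0) x + k" if "x \<in> set S" for x k
    using N[of x i0] that unfolding i0_def by simp
  then show ?thesis by (auto simp: metric_rep_def)
qed

end
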